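(* For every prime $p$ with $\gcd(120,p)=1$, the group $SL(2,5)\times\mathbb{Z}_p$ is $\psi$-normal divisible.
   Context: For a finite group $G$, $\psi(G)=\sum_{x\in G} o(x)$ denotes the sum of the orders of all elements of $G$. A finite group $G$ is called $\psi$-normal divisible if $\psi(H)$ divides $\psi(G)$ for every normal subgroup $H$ of $G$. $SL(2,5)$ is the special linear group of $2\times 2$ matrices of determinant $1$ over the field with $5$ elements (order $120$). *)

theory Defs
  imports "HOL-Algebra.Algebra"
begin

text \<open>Special linear group SL(2, Z/nZ): a 2x2 matrix [[a,b],[c,d]] is encoded as the
  tuple (a,b,c,d) of residues in {0..n-1}; the group operation is matrix multiplication
  reduced mod n.\<close>
definition SL2_mod :: "int \<Rightarrow> (int \<times> int \<times> int \<times> int) monoid" where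
  "SL2_mod n = \<lparr> carrier = {(x1,x2,x3,x4). x1 \<in> {0..<n} \<and> x2 \<in> {0..<n} \<and> x3 \<in> {0..<n} \<and> x4 \<in> {0..<n}
                                   \<and> (x1*x4 - x2*x3) mod n = 1 mod n},
               monoid.mult = (\<lambda>x y. case (x, y) of ((x1,x2,x3,x4), (y1,y2,y3,y4)) \<Rightarrow>
                  ((x1*y1 + x2*y3) mod n, (x1*y2 + x2*y4) mod n,
                   (x3*y1 + x4*y3) mod n, (x3*y2 + x4*y4) mod n)),
               one = (1 mod n, 0, 0, 1 mod n) \<rparr>"

definition psi :: "('a, 'b) monoid_scheme \<Rightarrow> nat" where
  "psi G = (\<Sum>x\<in>carrier G. group.ord G x)"

definition psi_normal_divisible :: "('a, 'b) monoid_scheme \<Rightarrow> bool" where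
  "psi_normal_divisible G \<longleftrightarrow> (\<forall>H. H \<lhd> G \<longrightarrow> psi (G\<lparr>carrier := H\<rparr>) dvd psi G)"

end

theory Submission
  imports Defs
begin

text \<open>
  In a direct product of two finite groups of coprime orders every subgroup is a product of
  subgroups of the factors (a suitable power of (a, b) is (a, 1), by Bezout), and the order of
  (a, b) is the product of the orders of a and b. Hence psi is multiplicative on such subgroups,
  and psi-normal divisibility passes from the factors to the product. The cyclic group of prime
  order p has only the trivial normal subgroups. For SL(2,5), of order 120 and coprime to p,
  every element is conjugate to a power of a fixed representative of its order and vice versa,
  so a normal subgroup is a union of the sets of elements of a given order; the only such unions
  whose size divides 120 have psi equal to 1, 3 or 663 = psi(SL(2,5)).
\<close>

section \<open>Element orders and psi\<close>

lemma ord_carrier_update: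
  assumes "group G" "subgroup K G"
  shows "group.ord (G\<lparr>carrier := K\<rparr>) x = group.ord G x"
  using subgroup.subgroup_is_group[OF assms(2,1)] assms(1)
  by (simp add: group.ord_def nat_pow_def)

lemma psi_subgroup:
  assumes "group G" "subgroup K G"
  shows "psi (G\<lparr>carrier := K\<rparr>) = (\<Sum>x\<in>K. group.ord G x)"
  using assms by (simp add: psi_def ord_carrier_update)

lemma subgroup_nat_pow_closed:
  assumes "group G" "subgroup K G" "x \<in> K"
  shows "x [^]\<^bsub>G\<^esub> (n::nat) \<in> K"
  using group.subgroup_int_pow_closed[OF assms, of "int n"] assms
  by (simp add: int_pow_int)

lemma (in group) ord_eqI:
  assumes "x \<in> carrier G" "0 < d" "x [^] d = \<one>" "\<And>j. 0 < j \<Longrightarrow> j < d \<Longrightarrow> x [^] j \<noteq> \<one>"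
  shows "ord x = d"
proof -
  have "ord x dvd d"
    using assms(1,3) pow_eq_id by blast
  moreover have "0 < ord x"
    using assms(1,2,3) ord_eq_0 by blast
  moreover have "x [^] ord x = \<one>"
    using assms(1) by simp
  ultimately show ?thesis
    using assms(2,4) by (metis dvd_imp_le le_neq_implies_less)
qed

lemma (in group) normal_conj_pow_mem:
  assumes "K \<lhd> G" "x \<in> K" "g \<in> carrier G" "y \<in> carrier G" "y \<otimes> g = g \<otimes> x [^] (e::nat)"
  shows "y \<in> K"
proof -
  have x: "x \<in> carrier G"
    using assms(1,2) normal_imp_subgroup subgroup.subset by blast
  have "y = g \<otimes> x [^] e \<otimes> inv g"
    using assms(3-5) x by (metis inv_solve_right nat_pow_closed m_closed)
  moreover have "x [^] e \<in> K"
    using subgroup_nat_pow_closed[OF is_group normal_imp_subgroup[OF assms(1)] assms(2)] .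
  ultimately show ?thesis
    using assms(1,3) normal.inv_op_closed2 by metis
qed

lemma psi_normal_divisible_prime_order:
  assumes "group G" "Factorial_Ring.prime (order G)"
  shows "psi_normal_divisible G"
  unfolding psi_normal_divisible_def
proof (intro allI impI)
  interpret G: group G by fact
  fix K assume "K \<lhd> G"
  then have "K = carrier G \<or> K = {\<one>\<^bsub>G\<^esub>}"
    using simple_group.no_real_normal_subgroup G.prime_order_simple assms(2) by blast
  moreover have "psi (G\<lparr>carrier := {\<one>\<^bsub>G\<^esub>}\<rparr>) = 1"
    using G.triv_subgroup assms(1) by (simp add: psi_subgroup)
  ultimately show "psi (G\<lparr>carrier := K\<rparr>) dvd psi G"
    by auto
qed

section \<open>Direct products of groups of coprime order\<close>

lemma nat_pow_DirProd:
  "(a, b) [^]\<^bsub>G \<times>\<times> H\<^esub> (n::nat) = (a [^]\<^bsub>G\<^esub> n, b [^]\<^bsub>H\<^esub> n)"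
  by (induction n) (simp_all add: nat_pow_def)

lemma ord_DirProd:
  assumes "group G" "group H" "a \<in> carrier G" "b \<in> carrier H"
  shows "group.ord (G \<times>\<times> H) (a, b) = lcm (group.ord G a) (group.ord H b)"
proof -
  interpret G: group G by fact
  interpret H: group H by fact
  interpret GH: group "G \<times>\<times> H" using assms by (simp add: DirProd_group)
  have "(a, b) [^]\<^bsub>G \<times>\<times> H\<^esub> n = \<one>\<^bsub>G \<times>\<times> H\<^esub> \<longleftrightarrow> lcm (G.ord a) (H.ord b) dvd n" for n :: nat
    using assms by (simp add: nat_pow_DirProd G.pow_eq_id H.pow_eq_id)
  then show ?thesis
    using assms by (simp add: GH.ord_unique)
qed

lemma coprime_orders_separating_pow:
  assumes "group G" "group H" "finite (carrier G)" "finite (carrier H)"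
    and "coprime (order G) (order H)" "a \<in> carrier G" "b \<in> carrier H"
  obtains n :: nat where "a [^]\<^bsub>G\<^esub> n = a" "b [^]\<^bsub>H\<^esub> n = \<one>\<^bsub>H\<^esub>"
proof -
  interpret G: group G by fact
  interpret H: group H by fact
  have "order H \<noteq> 0"
    using assms(4) H.one_closed by (auto simp: order_def)
  then obtain x y where xy: "order H * x = order G * y + 1"
    using bezout_nat[of "order H" "order G"] assms(5) by (auto simp: coprime_iff_gcd_eq_1 gcd.commute)
  have "a [^]\<^bsub>G\<^esub> (order H * x) = a"
    using assms(6) by (simp add: xy G.nat_pow_mult G.nat_pow_pow[symmetric] G.pow_order_eq_1)
  moreover have "b [^]\<^bsub>H\<^esub> (order H * x) = \<one>\<^bsub>H\<^esub>"
    using assms(7) by (simp add: H.nat_pow_pow[symmetric] H.pow_order_eq_1)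
  ultimately show ?thesis by (rule that)
qed

lemma subgroup_DirProd_coprime_eq:
  assumes "group G" "group H" "finite (carrier G)" "finite (carrier H)"
    and "coprime (order G) (order H)" "subgroup K (G \<times>\<times> H)"
  shows "K = {a. (a, \<one>\<^bsub>H\<^esub>) \<in> K} \<times> {b. (\<one>\<^bsub>G\<^esub>, b) \<in> K}"
proof (intro equalityI subsetI)
  have GH: "group (G \<times>\<times> H)"
    using assms by (simp add: DirProd_group)
  fix x assume "x \<in> K"
  then obtain a b where x: "x = (a, b)" "(a, b) \<in> K" "a \<in> carrier G" "b \<in> carrier H"
    using subgroup.subset[OF assms(6)] by (cases x) auto
  obtain n :: nat where "a [^]\<^bsub>G\<^esub> n = a" "b [^]\<^bsub>H\<^esub> n = \<one>\<^bsub>H\<^esub>"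
    using coprime_orders_separating_pow[OF assms(1-5) x(3,4)] .
  moreover obtain m :: nat where "b [^]\<^bsub>H\<^esub> m = b" "a [^]\<^bsub>G\<^esub> m = \<one>\<^bsub>G\<^esub>"
    using coprime_orders_separating_pow[OF assms(2,1,4,3) _ x(4,3)] assms(5)
    by (metis coprime_commute)
  ultimately show "x \<in> {a. (a, \<one>\<^bsub>H\<^esub>) \<in> K} \<times> {b. (\<one>\<^bsub>G\<^esub>, b) \<in> K}"
    using subgroup_nat_pow_closed[OF GH assms(6) x(2)] x(1) by (metis nat_pow_DirProd mem_Collect_eq mem_Sigma_iff)
next
  fix x assume "x \<in> {a. (a, \<one>\<^bsub>H\<^esub>) \<in> K} \<times> {b. (\<one>\<^bsub>G\<^esub>, b) \<in> K}"
  then obtain a b where x: "x = (a, b)" "(a, \<one>\<^bsub>H\<^esub>) \<in> K" "(\<one>\<^bsub>G\<^esub>, b) \<in> K"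
    by auto
  then have "a \<in> carrier G" "b \<in> carrier H"
    using subgroup.subset[OF assms(6)] by auto
  then show "x \<in> K"
    using subgroup.m_closed[OF assms(6) x(2,3)] x(1) assms(1,2) by (simp add: group.is_monoid)
qed

lemma (in group_hom) normal_vimage:
  assumes "N \<lhd> H"
  shows "{x \<in> carrier G. h x \<in> N} \<lhd> G"
proof (rule G.normal_invI)
  interpret N: normal N H by fact
  show "subgroup {x \<in> carrier G. h x \<in> N} G"
    by (rule G.subgroupI) (auto simp: N.m_inv_closed N.m_closed)
  show "x \<otimes>\<^bsub>G\<^esub> y \<otimes>\<^bsub>G\<^esub> inv\<^bsub>G\<^esub> x \<in> {x \<in> carrier G. h x \<in> N}"
    if "x \<in> carrier G" "y \<in> {x \<in> carrier G. h x \<in> N}" for x y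
    using that N.inv_op_closed2 by simp
qed

lemma normal_DirProd_slices:
  assumes "group G" "group H" "K \<lhd> G \<times>\<times> H"
  shows "{a. (a, \<one>\<^bsub>H\<^esub>) \<in> K} \<lhd> G" and "{b. (\<one>\<^bsub>G\<^esub>, b) \<in> K} \<lhd> H"
proof -
  interpret G: group G by fact
  interpret H: group H by fact
  have GH: "group (G \<times>\<times> H)"
    using assms by (simp add: DirProd_group)
  have K: "K \<subseteq> carrier G \<times> carrier H"
    using subgroup.subset[OF normal_imp_subgroup[OF assms(3)]] by simp
  have "group_hom G (G \<times>\<times> H) (\<lambda>a. (a, \<one>\<^bsub>H\<^esub>))"
    using GH by (simp add: group_hom_def group_hom_axioms_def hom_def)
  moreover have "{a. (a, \<one>\<^bsub>H\<^esub>) \<in> K} = {a \<in> carrier G. (a, \<one>\<^bsub>H\<^esub>) \<in> K}"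
    using K by blast
  ultimately show "{a. (a, \<one>\<^bsub>H\<^esub>) \<in> K} \<lhd> G"
    using group_hom.normal_vimage[OF _ assms(3)] by simp
  have "group_hom H (G \<times>\<times> H) (\<lambda>b. (\<one>\<^bsub>G\<^esub>, b))"
    using GH by (simp add: group_hom_def group_hom_axioms_def hom_def)
  moreover have "{b. (\<one>\<^bsub>G\<^esub>, b) \<in> K} = {b \<in> carrier H. (\<one>\<^bsub>G\<^esub>, b) \<in> K}"
    using K by blast
  ultimately show "{b. (\<one>\<^bsub>G\<^esub>, b) \<in> K} \<lhd> H"
    using group_hom.normal_vimage[OF _ assms(3)] by simp
qed

lemma psi_DirProd_subgroups_coprime:
  assumes "group G" "group H" "coprime (order G) (order H)"
    and "subgroup K1 G" "subgroup K2 H"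
  shows "psi ((G \<times>\<times> H)\<lparr>carrier := K1 \<times> K2\<rparr>) = psi (G\<lparr>carrier := K1\<rparr>) * psi (H\<lparr>carrier := K2\<rparr>)"
proof -
  interpret G: group G by fact
  interpret H: group H by fact
  have ord_pair: "group.ord (G \<times>\<times> H) (a, b) = G.ord a * H.ord b" if "a \<in> K1" "b \<in> K2" for a b
  proof -
    have "a \<in> carrier G" "b \<in> carrier H"
      using that subgroup.subset assms(4,5) by blast+
    moreover from this have "coprime (G.ord a) (H.ord b)"
      using assms(3) G.ord_dvd_group_order H.ord_dvd_group_order coprime_divisors by blast
    ultimately show ?thesis
      using assms(1,2) by (simp add: ord_DirProd lcm_coprime)
  qed
  have "subgroup (K1 \<times> K2) (G \<times>\<times> H)"
    using DirProd_subgroups[OF assms(1) assms(4) assms(2) assms(5)] .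
  then have "psi ((G \<times>\<times> H)\<lparr>carrier := K1 \<times> K2\<rparr>) = (\<Sum>x\<in>K1 \<times> K2. group.ord (G \<times>\<times> H) x)"
    using psi_subgroup DirProd_group assms(1,2) by blast
  also have "\<dots> = (\<Sum>(a, b)\<in>K1 \<times> K2. G.ord a * H.ord b)"
    using ord_pair by (intro sum.cong) auto
  also have "\<dots> = (\<Sum>a\<in>K1. G.ord a) * (\<Sum>b\<in>K2. H.ord b)"
    by (simp add: sum.cartesian_product sum_product)
  also have "\<dots> = psi (G\<lparr>carrier := K1\<rparr>) * psi (H\<lparr>carrier := K2\<rparr>)"
    using assms(1,2,4,5) by (simp add: psi_subgroup)
  finally show ?thesis .
qed

theorem psi_normal_divisible_DirProd_coprime:
  assumes "group G" "group H" "finite (carrier G)" "finite (carrier H)"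
    and "coprime (order G) (order H)"
    and "psi_normal_divisible G" "psi_normal_divisible H"
  shows "psi_normal_divisible (G \<times>\<times> H)"
  unfolding psi_normal_divisible_def
proof (intro allI impI)
  fix K assume K: "K \<lhd> G \<times>\<times> H"
  define K1 where "K1 = {a. (a, \<one>\<^bsub>H\<^esub>) \<in> K}"
  define K2 where "K2 = {b. (\<one>\<^bsub>G\<^esub>, b) \<in> K}"
  have "K = K1 \<times> K2"
    unfolding K1_def K2_def using subgroup_DirProd_coprime_eq assms(1-5) normal_imp_subgroup[OF K] .
  moreover have "K1 \<lhd> G" "K2 \<lhd> H"
    unfolding K1_def K2_def using normal_DirProd_slices assms(1,2) K by blast+
  moreover have "G\<lparr>carrier := carrier G\<rparr> = G" "H\<lparr>carrier := carrier H\<rparr> = H"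
    "(G \<times>\<times> H)\<lparr>carrier := carrier G \<times> carrier H\<rparr> = G \<times>\<times> H"
    by simp_all
  ultimately show "psi ((G \<times>\<times> H)\<lparr>carrier := K\<rparr>) dvd psi (G \<times>\<times> H)"
    using psi_DirProd_subgroups_coprime[of G H] assms normal_imp_subgroup group.subgroup_self
    unfolding psi_normal_divisible_def by (metis mult_dvd_mono)
qed

section \<open>The groups SL(2, Z/nZ)\<close>

type_synonym mat2 = "int \<times> int \<times> int \<times> int"

definition mat_mult_mod :: "int \<Rightarrow> mat2 \<Rightarrow> mat2 \<Rightarrow> mat2" where
  "mat_mult_mod n x y = (case (x, y) of ((x1, x2, x3, x4), (y1, y2, y3, y4)) \<Rightarrow>
     ((x1*y1 + x2*y3) mod n, (x1*y2 + x2*y4) mod n, (x3*y1 + x4*y3) mod n, (x3*y2 + x4*y4) mod n))"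

fun mat_pow_mod :: "int \<Rightarrow> mat2 \<Rightarrow> nat \<Rightarrow> mat2" where
  "mat_pow_mod n x 0 = (1, 0, 0, 1)"
| "mat_pow_mod n x (Suc k) = mat_mult_mod n (mat_pow_mod n x k) x"

definition is_SL2_mod :: "int \<Rightarrow> mat2 \<Rightarrow> bool" where
  "is_SL2_mod n x = (case x of (x1, x2, x3, x4) \<Rightarrow>
     x1 \<in> {0..<n} \<and> x2 \<in> {0..<n} \<and> x3 \<in> {0..<n} \<and> x4 \<in> {0..<n} \<and> (x1*x4 - x2*x3) mod n = 1 mod n)"

lemma carrier_SL2_mod: "carrier (SL2_mod n) = Collect (is_SL2_mod n)"
  by (auto simp: SL2_mod_def is_SL2_mod_def)

lemma SL2_mod_mult: "x \<otimes>\<^bsub>SL2_mod n\<^esub> y = mat_mult_mod n x y"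
  by (simp add: SL2_mod_def mat_mult_mod_def)

lemma one_SL2_mod: "\<one>\<^bsub>SL2_mod n\<^esub> = (1 mod n, 0, 0, 1 mod n)"
  by (simp add: SL2_mod_def)

lemma SL2_mod_nat_pow:
  assumes "1 < n"
  shows "x [^]\<^bsub>SL2_mod n\<^esub> k = mat_pow_mod n x k"
  using assms by (induction k) (simp_all add: SL2_mod_def mat_mult_mod_def)

lemma det_mod_mult:
  "(((x1*y1 + x2*y3) mod n) * ((x3*y2 + x4*y4) mod n) - ((x1*y2 + x2*y4) mod n) * ((x3*y1 + x4*y3) mod n)) mod n
     = ((x1*x4 - x2*x3) * (y1*y4 - y2*y3)) mod (n::int)"
proof -
  have "(x1*y1 + x2*y3) * (x3*y2 + x4*y4) - (x1*y2 + x2*y4) * (x3*y1 + x4*y3) = (x1*x4 - x2*x3) * (y1*y4 - y2*y3)"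
    by (simp add: algebra_simps)
  then show ?thesis
    by (metis mod_diff_eq mod_mult_eq)
qed

lemma mod_add_mult_left_eq: "(a mod n * b + c mod n * d) mod n = (a * b + c * d) mod (n::int)"
  by (metis mod_add_eq mod_mult_left_eq)

lemma mod_add_mult_right_eq: "(a * (b mod n) + c * (d mod n)) mod n = (a * b + c * d) mod (n::int)"
  by (metis mod_add_eq mod_mult_right_eq)

lemma SL2_mod_adjugate_mult:
  "(x4, (-x2) mod n, (-x3) mod n, x1) \<otimes>\<^bsub>SL2_mod n\<^esub> (x1, x2, x3, x4)
     = ((x1*x4 - x2*x3) mod n, 0, 0, (x1*x4 - x2*x3) mod n)"
proof -
  have mod_right: "(u + v mod n * w) mod n = (u + v * w) mod n" for u v w :: int
    by (metis mod_add_right_eq mod_mult_left_eq)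
  have mod_left: "(v mod n * w + u) mod n = (v * w + u) mod n" for u v w :: int
    by (metis mod_add_left_eq mod_mult_left_eq)
  show ?thesis
    unfolding SL2_mod_mult mat_mult_mod_def
    by (simp only: prod.case mod_right mod_left) (simp add: algebra_simps)
qed

lemma group_SL2_mod:
  assumes "n > 0"
  shows "group (SL2_mod n)"
proof (rule groupI)
  fix x y z
  assume "x \<in> carrier (SL2_mod n)" "y \<in> carrier (SL2_mod n)" "z \<in> carrier (SL2_mod n)"
  show "x \<otimes>\<^bsub>SL2_mod n\<^esub> y \<otimes>\<^bsub>SL2_mod n\<^esub> z = x \<otimes>\<^bsub>SL2_mod n\<^esub> (y \<otimes>\<^bsub>SL2_mod n\<^esub> z)"
    by (cases x; cases y; cases z)
      (simp only: SL2_mod_mult mat_mult_mod_def prod.case mod_add_mult_left_eq mod_add_mult_right_eq,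
       simp add: algebra_simps)
next
  fix x y
  assume "x \<in> carrier (SL2_mod n)" "y \<in> carrier (SL2_mod n)"
  moreover have "(u * v) mod n = 1 mod n" if "u mod n = 1 mod n" "v mod n = 1 mod n" for u v :: int
    using that by (metis mod_mult_eq mult_1)
  ultimately show "x \<otimes>\<^bsub>SL2_mod n\<^esub> y \<in> carrier (SL2_mod n)"
    using assms by (cases x; cases y) (auto simp: SL2_mod_mult mat_mult_mod_def det_mod_mult SL2_mod_def)
next
  show "\<one>\<^bsub>SL2_mod n\<^esub> \<in> carrier (SL2_mod n)"
    using assms mod_mult_eq[of 1 n 1] by (simp add: SL2_mod_def)
next
  fix x
  assume "x \<in> carrier (SL2_mod n)"
  then show "\<one>\<^bsub>SL2_mod n\<^esub> \<otimes>\<^bsub>SL2_mod n\<^esub> x = x"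
    by (cases x) (simp add: SL2_mod_def mod_simps)
next
  fix x
  assume "x \<in> carrier (SL2_mod n)"
  then obtain x1 x2 x3 x4 where x: "x = (x1, x2, x3, x4)" "(x1*x4 - x2*x3) mod n = 1 mod n"
    "x1 \<in> {0..<n}" "x2 \<in> {0..<n}" "x3 \<in> {0..<n}" "x4 \<in> {0..<n}"
    by (auto simp: SL2_mod_def)
  have "(x4 * x1 - (-x2) mod n * ((-x3) mod n)) mod n = (x1*x4 - x2*x3) mod n"
    by (metis mod_diff_right_eq mod_mult_eq mult.commute minus_mult_minus)
  then have "(x4, (-x2) mod n, (-x3) mod n, x1) \<in> carrier (SL2_mod n)"
    using x assms by (simp add: SL2_mod_def)
  then show "\<exists>y\<in>carrier (SL2_mod n). y \<otimes>\<^bsub>SL2_mod n\<^esub> x = \<one>\<^bsub>SL2_mod n\<^esub>"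
    by (rule bexI[rotated]) (simp add: x(1,2) SL2_mod_adjugate_mult one_SL2_mod)
qed

section \<open>The group SL(2,5)\<close>

lemma sum_comp_fibres:
  fixes g :: "'b \<Rightarrow> 'c::comm_semiring_1"
  assumes "finite A" "finite S"
  shows "(\<Sum>x\<in>{x\<in>A. f x \<in> S}. g (f x)) = (\<Sum>k\<in>S. of_nat (card {x\<in>A. f x = k}) * g k)"
proof -
  have "(\<Sum>x\<in>{x\<in>A. f x \<in> S}. g (f x)) = (\<Sum>x\<in>(\<Union>k\<in>S. {x\<in>A. f x = k}). g (f x))"
    by (rule sum.cong) auto
  also have "\<dots> = (\<Sum>k\<in>S. \<Sum>x\<in>{x\<in>A. f x = k}. g (f x))"
    using assms by (intro sum.UNION_disjoint) auto
  also have "\<dots> = (\<Sum>k\<in>S. of_nat (card {x\<in>A. f x = k}) * g k)"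
    by (intro sum.cong) auto
  finally show ?thesis .
qed

lemma card_fst_filter:
  assumes "distinct (map fst xs)" "\<And>x y. (x, y) \<in> set xs \<Longrightarrow> f x = g y"
  shows "card {x \<in> fst ` set xs. f x = k} = length (filter (\<lambda>(x, y). g y = k) xs)"
  using assms
proof (induction xs)
  case (Cons r xs)
  obtain x y where r: "r = (x, y)"
    by (cases r)
  have "x \<notin> fst ` set xs"
    using Cons.prems(1) r by simp
  moreover have "{z \<in> fst ` set (r # xs). f z = k}
      = (if g y = k then insert x {z \<in> fst ` set xs. f z = k} else {z \<in> fst ` set xs. f z = k})"
    using Cons.prems(2)[of x y] r by auto
  ultimately show ?case
    using Cons r by simp
qed simp

text \<open>
  A row (x, d, g, e, h, f) of the certificate records an element x, its order d, and conjugators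
  with r g = g x^e and x h = h r^f for the representative r = SL2_5_class_rep d (the last branch
  of SL2_5_class_rep serves order 10). So x and r lie in the same normal subgroups.
\<close>

definition SL2_5_class_rep :: "nat \<Rightarrow> mat2" where
  "SL2_5_class_rep k =
     (if k = 1 then (1,0,0,1) else if k = 2 then (4,0,0,4) else if k = 3 then (0,1,4,4)
      else if k = 4 then (0,1,4,0) else if k = 5 then (0,1,4,2) else if k = 6 then (0,1,4,1)
      else (0,1,4,3))"

definition SL2_5_certificate :: "(mat2 \<times> nat \<times> mat2 \<times> nat \<times> mat2 \<times> nat) list" where
  "SL2_5_certificate = [
  ((0,1,4,0), 4, (0,1,4,0), 1, (0,1,4,0), 1),
  ((0,1,4,1), 6, (0,1,4,1), 1, (0,1,4,1), 1),
  ((0,1,4,2), 5, (0,1,4,2), 1, (0,1,4,2), 1),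
  ((0,1,4,3), 10, (0,1,4,3), 1, (0,1,4,3), 1),
  ((0,1,4,4), 3, (0,1,4,4), 1, (0,1,4,4), 1),
  ((0,2,2,0), 4, (2,1,2,4), 1, (1,1,2,3), 1),
  ((0,2,2,1), 6, (1,1,2,3), 1, (1,2,4,4), 1),
  ((0,2,2,2), 5, (0,1,4,3), 2, (0,1,4,4), 2),
  ((0,2,2,3), 10, (0,2,2,2), 3, (0,2,2,1), 3),
  ((0,2,2,4), 3, (1,3,1,4), 1, (1,3,1,4), 1),
  ((0,3,3,0), 4, (1,2,1,3), 1, (2,2,1,4), 1),
  ((0,3,3,1), 6, (1,1,3,4), 1, (1,1,3,4), 1),
  ((0,3,3,2), 5, (0,2,2,1), 2, (0,2,2,2), 2),
  ((0,3,3,3), 10, (0,1,4,1), 3, (0,1,4,2), 3),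
  ((0,3,3,4), 3, (1,4,2,4), 1, (1,2,1,3), 1),
  ((0,4,1,0), 4, (0,2,2,0), 1, (0,2,2,0), 1),
  ((0,4,1,1), 6, (0,2,2,2), 1, (0,2,2,3), 1),
  ((0,4,1,2), 5, (0,2,2,4), 1, (0,2,2,1), 1),
  ((0,4,1,3), 10, (0,2,2,1), 1, (0,2,2,4), 1),
  ((0,4,1,4), 3, (0,2,2,3), 1, (0,2,2,2), 1),
  ((1,0,0,1), 1, (0,1,4,0), 1, (0,1,4,0), 1),
  ((1,0,1,1), 5, (0,2,2,2), 1, (2,3,0,3), 1),
  ((1,0,2,1), 5, (0,1,4,1), 2, (2,3,0,3), 2),
  ((1,0,3,1), 5, (0,2,2,2), 2, (1,4,0,1), 2),
  ((1,0,4,1), 5, (0,1,4,1), 1, (1,4,0,1), 1),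
  ((1,1,0,1), 5, (1,0,1,1), 1, (0,1,4,1), 1),
  ((1,1,1,2), 10, (0,2,2,4), 1, (0,1,4,2), 1),
  ((1,1,2,3), 3, (1,0,1,1), 1, (0,1,4,3), 1),
  ((1,1,3,4), 4, (1,0,1,1), 1, (0,1,4,4), 1),
  ((1,1,4,0), 6, (0,1,4,0), 1, (0,1,4,0), 1),
  ((1,2,0,1), 5, (2,0,2,3), 2, (0,1,4,1), 2),
  ((1,2,1,3), 3, (0,2,2,1), 1, (1,3,3,0), 1),
  ((1,2,2,0), 6, (1,3,2,2), 1, (1,2,1,3), 1),
  ((1,2,3,2), 10, (0,1,4,3), 3, (0,2,2,0), 3),
  ((1,2,4,4), 4, (0,1,4,4), 1, (1,1,4,0), 1),
  ((1,3,0,1), 5, (1,0,1,1), 2, (0,2,2,3), 2),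
  ((1,3,1,4), 4, (0,2,2,3), 1, (2,2,2,0), 1),
  ((1,3,2,2), 10, (0,2,2,1), 3, (0,1,4,0), 3),
  ((1,3,3,0), 6, (1,4,3,3), 1, (1,1,1,2), 1),
  ((1,3,4,3), 3, (0,1,4,3), 1, (1,2,4,4), 1),
  ((1,4,0,1), 5, (2,0,2,3), 1, (0,2,2,3), 1),
  ((1,4,1,0), 6, (0,2,2,0), 1, (0,2,2,0), 1),
  ((1,4,2,4), 4, (2,0,2,3), 1, (0,2,2,2), 1),
  ((1,4,3,3), 3, (1,2,2,0), 1, (0,2,2,4), 1),
  ((1,4,4,2), 10, (0,1,4,2), 1, (0,2,2,1), 1),
  ((2,0,0,3), 4, (1,1,2,3), 1, (1,3,4,3), 1),
  ((2,0,1,3), 4, (0,2,2,1), 1, (1,3,3,0), 1),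
  ((2,0,2,3), 4, (2,2,3,1), 1, (1,3,2,2), 1),
  ((2,0,3,3), 4, (1,3,1,4), 1, (1,3,1,4), 1),
  ((2,0,4,3), 4, (0,1,4,3), 1, (1,3,0,1), 1),
  ((2,1,0,3), 4, (1,0,2,1), 1, (0,1,4,3), 1),
  ((2,1,1,1), 10, (0,2,2,2), 1, (0,1,4,1), 1),
  ((2,1,2,4), 6, (1,0,2,1), 1, (0,1,4,4), 1),
  ((2,1,3,2), 3, (1,0,2,1), 1, (0,1,4,2), 1),
  ((2,1,4,0), 5, (0,1,4,0), 1, (0,1,4,0), 1),
  ((2,2,0,3), 4, (1,4,2,4), 1, (1,1,1,2), 1),
  ((2,2,1,4), 6, (0,2,2,3), 1, (1,2,3,2), 1),
  ((2,2,2,0), 5, (0,1,4,4), 2, (0,1,4,3), 2),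
  ((2,2,3,1), 10, (0,1,4,0), 3, (0,2,2,4), 3),
  ((2,2,4,2), 3, (0,1,4,2), 1, (1,3,0,1), 1),
  ((2,3,0,3), 4, (1,3,2,2), 1, (2,2,3,1), 1),
  ((2,3,1,2), 3, (0,2,2,4), 1, (1,2,2,0), 1),
  ((2,3,2,1), 10, (0,2,2,0), 3, (0,1,4,3), 3),
  ((2,3,3,0), 5, (0,2,2,3), 2, (0,2,2,4), 2),
  ((2,3,4,4), 6, (0,1,4,4), 1, (1,1,4,0), 1),
  ((2,4,0,3), 4, (1,2,2,0), 1, (0,2,2,4), 1),
  ((2,4,1,0), 5, (0,2,2,0), 1, (0,2,2,0), 1),
  ((2,4,2,2), 3, (1,2,1,3), 1, (0,2,2,1), 1),
  ((2,4,3,4), 6, (1,2,3,2), 1, (0,2,2,2), 1),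
  ((2,4,4,1), 10, (0,1,4,1), 1, (0,2,2,3), 1),
  ((3,0,0,2), 4, (1,4,3,3), 1, (1,2,1,3), 1),
  ((3,0,1,2), 4, (0,2,2,4), 1, (1,2,2,0), 1),
  ((3,0,2,2), 4, (2,1,3,2), 1, (1,2,3,2), 1),
  ((3,0,3,2), 4, (1,1,1,2), 1, (1,2,4,4), 1),
  ((3,0,4,2), 4, (0,1,4,2), 1, (1,2,0,1), 1),
  ((3,1,0,2), 4, (1,0,3,1), 1, (0,1,4,2), 1),
  ((3,1,1,4), 5, (0,2,2,3), 1, (0,1,4,4), 1),
  ((3,1,2,1), 3, (1,0,3,1), 1, (0,1,4,1), 1),
  ((3,1,3,3), 6, (1,0,3,1), 1, (0,1,4,3), 1),
  ((3,1,4,0), 10, (0,1,4,0), 1, (0,1,4,0), 1),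
  ((3,2,0,2), 4, (1,1,3,4), 1, (1,1,3,4), 1),
  ((3,2,1,1), 3, (0,2,2,2), 1, (1,3,2,2), 1),
  ((3,2,2,0), 10, (0,2,2,4), 3, (0,2,2,3), 3),
  ((3,2,3,4), 5, (0,2,2,4), 2, (0,1,4,0), 2),
  ((3,2,4,3), 6, (0,1,4,3), 1, (1,2,0,1), 1),
  ((3,3,0,2), 4, (1,2,3,2), 1, (2,2,4,2), 1),
  ((3,3,1,3), 6, (0,2,2,1), 1, (1,1,2,3), 1),
  ((3,3,2,4), 5, (0,1,4,2), 2, (0,2,2,0), 2),
  ((3,3,3,0), 10, (0,1,4,2), 3, (0,1,4,1), 3),
  ((3,3,4,1), 3, (0,1,4,1), 1, (1,2,0,1), 1),
  ((3,4,0,2), 4, (1,3,3,0), 1, (0,2,2,1), 1),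
  ((3,4,1,0), 10, (0,2,2,0), 1, (0,2,2,0), 1),
  ((3,4,2,3), 6, (1,2,2,0), 1, (0,2,2,4), 1),
  ((3,4,3,1), 3, (1,3,2,2), 1, (0,2,2,3), 1),
  ((3,4,4,4), 5, (0,1,4,4), 1, (0,2,2,2), 1),
  ((4,0,0,4), 2, (0,1,4,0), 1, (0,1,4,0), 1),
  ((4,0,1,4), 10, (0,2,2,3), 1, (2,2,0,3), 1),
  ((4,0,2,4), 10, (0,2,2,3), 3, (1,1,0,1), 3),
  ((4,0,3,4), 10, (0,1,4,4), 3, (2,2,0,3), 3),
  ((4,0,4,4), 10, (0,1,4,4), 1, (1,1,0,1), 1),
  ((4,1,0,4), 10, (1,0,4,1), 1, (0,1,4,4), 1),
  ((4,1,1,3), 5, (0,2,2,1), 1, (0,1,4,3), 1),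
  ((4,1,2,2), 6, (1,0,4,1), 1, (0,1,4,2), 1),
  ((4,1,3,1), 4, (1,0,4,1), 1, (0,1,4,1), 1),
  ((4,1,4,0), 3, (0,1,4,0), 1, (0,1,4,0), 1),
  ((4,2,0,4), 10, (1,0,4,1), 3, (0,2,2,2), 3),
  ((4,2,1,2), 6, (0,2,2,4), 1, (1,2,2,0), 1),
  ((4,2,2,0), 3, (1,1,1,2), 1, (1,3,4,3), 1),
  ((4,2,3,3), 5, (0,2,2,0), 2, (0,1,4,2), 2),
  ((4,2,4,1), 4, (0,1,4,1), 1, (1,1,0,1), 1),
  ((4,3,0,4), 10, (2,0,3,3), 3, (0,1,4,4), 3),
  ((4,3,1,1), 4, (0,2,2,2), 1, (2,2,0,3), 1),
  ((4,3,2,3), 5, (0,1,4,0), 2, (0,2,2,1), 2),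
  ((4,3,3,0), 3, (1,1,2,3), 1, (1,2,3,2), 1),
  ((4,3,4,2), 6, (0,1,4,2), 1, (1,1,0,1), 1),
  ((4,4,0,4), 10, (2,0,3,3), 1, (0,2,2,2), 1),
  ((4,4,1,0), 3, (0,2,2,0), 1, (0,2,2,0), 1),
  ((4,4,2,1), 4, (2,0,3,3), 1, (0,2,2,3), 1),
  ((4,4,3,2), 6, (1,3,3,0), 1, (0,2,2,1), 1),
  ((4,4,4,3), 5, (0,1,4,3), 1, (0,2,2,4), 1)]"

lemma carrier_SL2_5: "carrier (SL2_mod 5) = fst ` set SL2_5_certificate"
proof -
  define residues where
    "residues = [(x1, x2, x3, x4). x1 \<leftarrow> [0..4], x2 \<leftarrow> [0..4], x3 \<leftarrow> [0..4], x4 \<leftarrow> [0..4::int]]"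
  have enum: "filter (is_SL2_mod 5) residues = map fst SL2_5_certificate"
    unfolding residues_def by code_simp
  have complete: "is_SL2_mod 5 x \<Longrightarrow> x \<in> set residues" for x
    by (cases x) (force simp: is_SL2_mod_def residues_def)
  have "Collect (is_SL2_mod 5) = set (filter (is_SL2_mod 5) residues)"
    using complete by auto
  then show ?thesis
    by (simp add: carrier_SL2_mod enum)
qed

lemma SL2_5_certificate_distinct: "distinct (map fst SL2_5_certificate)"
  by code_simp

lemma order_SL2_5: "order (SL2_mod 5) = 120"
  using SL2_5_certificate_distinct distinct_card
  by (fastforce simp: order_def carrier_SL2_5 SL2_5_certificate_def)

lemma SL2_5_certificate_ord:
  "list_all (\<lambda>(x, d, _). 0 < d \<and> mat_pow_mod 5 x d = (1, 0, 0, 1)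
     \<and> (\<forall>j\<in>set [1..<d]. mat_pow_mod 5 x j \<noteq> (1, 0, 0, 1))) SL2_5_certificate"
  by code_simp

lemma SL2_5_certificate_conj:
  "list_all (\<lambda>(x, d, g, e, h, f). is_SL2_mod 5 g \<and> is_SL2_mod 5 h
     \<and> mat_mult_mod 5 (SL2_5_class_rep d) g = mat_mult_mod 5 g (mat_pow_mod 5 x e)
     \<and> mat_mult_mod 5 x h = mat_mult_mod 5 h (mat_pow_mod 5 (SL2_5_class_rep d) f))
   SL2_5_certificate"
  by code_simp

definition SL2_5_ord_counts :: "nat list" where
  "SL2_5_ord_counts = [0, 1, 1, 20, 30, 24, 20, 0, 0, 0, 24]"

lemma SL2_5_certificate_ord_counts:
  "map (\<lambda>k. length (filter (\<lambda>(x, y). fst y = k) SL2_5_certificate)) [0..<11] = SL2_5_ord_counts"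
  unfolding SL2_5_ord_counts_def by code_simp

lemma SL2_5_ord_class_unions:
  "\<forall>S \<in> Pow {1, 2, 3, 4, 5, 6, 10}. 1 \<in> S \<longrightarrow> (\<Sum>k\<in>S. SL2_5_ord_counts ! k) dvd 120
     \<longrightarrow> (\<Sum>k\<in>S. k * SL2_5_ord_counts ! k) dvd 663"
  unfolding SL2_5_ord_counts_def by code_simp

lemma SL2_5_class_rep_carrier: "SL2_5_class_rep k \<in> carrier (SL2_mod 5)"
  by (simp add: SL2_5_class_rep_def carrier_SL2_mod is_SL2_mod_def)

lemma ord_SL2_5:
  assumes "(x, d, c) \<in> set SL2_5_certificate"
  shows "group.ord (SL2_mod 5) x = d"
proof -
  interpret group "SL2_mod 5"
    by (simp add: group_SL2_mod)
  have "0 < d" "mat_pow_mod 5 x d = (1, 0, 0, 1)"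
    and "\<And>j. 0 < j \<Longrightarrow> j < d \<Longrightarrow> mat_pow_mod 5 x j \<noteq> (1, 0, 0, 1)"
    using SL2_5_certificate_ord assms by (fastforce simp: list_all_iff)+
  moreover have "x \<in> carrier (SL2_mod 5)"
    using assms carrier_SL2_5 by force
  ultimately show ?thesis
    by (intro ord_eqI) (simp_all add: SL2_mod_nat_pow one_SL2_mod)
qed

lemma normal_SL2_5_mem_iff:
  assumes "K \<lhd> SL2_mod 5" "x \<in> carrier (SL2_mod 5)"
  shows "x \<in> K \<longleftrightarrow> SL2_5_class_rep (group.ord (SL2_mod 5) x) \<in> K"
proof -
  interpret group "SL2_mod 5"
    by (simp add: group_SL2_mod)
  obtain d g e h f where row: "(x, d, g, e, h, f) \<in> set SL2_5_certificate"
    using assms(2) carrier_SL2_5 by force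
  then have d: "ord x = d"
    using ord_SL2_5 by blast
  have "is_SL2_mod 5 g" "is_SL2_mod 5 h"
    and conj: "mat_mult_mod 5 (SL2_5_class_rep d) g = mat_mult_mod 5 g (mat_pow_mod 5 x e)"
      "mat_mult_mod 5 x h = mat_mult_mod 5 h (mat_pow_mod 5 (SL2_5_class_rep d) f)"
    using SL2_5_certificate_conj row by (fastforce simp: list_all_iff)+
  then have "g \<in> carrier (SL2_mod 5)" "h \<in> carrier (SL2_mod 5)"
    by (simp_all add: carrier_SL2_mod)
  show ?thesis
  proof
    assume "x \<in> K"
    show "SL2_5_class_rep (ord x) \<in> K"
      using normal_conj_pow_mem[OF assms(1) \<open>x \<in> K\<close> \<open>g \<in> carrier _\<close> SL2_5_class_rep_carrier] conj(1)
      by (simp add: d SL2_mod_mult SL2_mod_nat_pow)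
  next
    assume "SL2_5_class_rep (ord x) \<in> K"
    then show "x \<in> K"
      using normal_conj_pow_mem[OF assms(1) _ \<open>h \<in> carrier _\<close> assms(2)] conj(2)
      by (simp add: d SL2_mod_mult SL2_mod_nat_pow)
  qed
qed

lemma card_SL2_5_ord_class:
  assumes "k < 11"
  shows "card {x \<in> carrier (SL2_mod 5). group.ord (SL2_mod 5) x = k} = SL2_5_ord_counts ! k"
proof -
  have "card {x \<in> carrier (SL2_mod 5). group.ord (SL2_mod 5) x = k}
      = length (filter (\<lambda>(x, y). fst y = k) SL2_5_certificate)"
    unfolding carrier_SL2_5
    using card_fst_filter[OF SL2_5_certificate_distinct, of "group.ord (SL2_mod 5)" fst k] ord_SL2_5
    by force
  then show ?thesis
    using assms by (simp flip: SL2_5_certificate_ord_counts)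
qed

lemma sum_SL2_5_ord_classes:
  fixes g :: "nat \<Rightarrow> nat"
  assumes "T \<subseteq> {1, 2, 3, 4, 5, 6, 10}"
  shows "(\<Sum>x\<in>{x \<in> carrier (SL2_mod 5). group.ord (SL2_mod 5) x \<in> T}. g (group.ord (SL2_mod 5) x))
    = (\<Sum>k\<in>T. SL2_5_ord_counts ! k * g k)"
proof -
  have "finite (carrier (SL2_mod 5))" "finite T"
    using assms finite_subset by (auto simp: carrier_SL2_5)
  then have "(\<Sum>x\<in>{x \<in> carrier (SL2_mod 5). group.ord (SL2_mod 5) x \<in> T}. g (group.ord (SL2_mod 5) x))
      = (\<Sum>k\<in>T. card {x \<in> carrier (SL2_mod 5). group.ord (SL2_mod 5) x = k} * g k)"
    using sum_comp_fibres[where A = "carrier (SL2_mod 5)" and S = T and f = "group.ord (SL2_mod 5)" and g = g]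
    by simp
  also have "\<dots> = (\<Sum>k\<in>T. SL2_5_ord_counts ! k * g k)"
    using assms by (intro sum.cong) (auto simp: card_SL2_5_ord_class)
  finally show ?thesis .
qed

lemma SL2_5_ord_range:
  "carrier (SL2_mod 5) = {x \<in> carrier (SL2_mod 5). group.ord (SL2_mod 5) x \<in> {1, 2, 3, 4, 5, 6, 10}}"
proof -
  have "card {x \<in> carrier (SL2_mod 5). group.ord (SL2_mod 5) x \<in> {1, 2, 3, 4, 5, 6, 10}}
      = card (carrier (SL2_mod 5))"
    using sum_SL2_5_ord_classes[of "{1, 2, 3, 4, 5, 6, 10}" "\<lambda>_. 1"] order_SL2_5
    by (simp add: order_def SL2_5_ord_counts_def)
  then show ?thesis
    by (metis (no_types, lifting) card_subset_eq carrier_SL2_5 finite_imageI List.finite_set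
        mem_Collect_eq subsetI)
qed

lemma psi_SL2_5: "psi (SL2_mod 5) = 663"
  using sum_SL2_5_ord_classes[of "{1, 2, 3, 4, 5, 6, 10}" id] SL2_5_ord_range
  by (simp add: psi_def SL2_5_ord_counts_def)

lemma normal_SL2_5_eq_ord_classes:
  assumes "K \<lhd> SL2_mod 5"
  shows "K = {x \<in> carrier (SL2_mod 5). group.ord (SL2_mod 5) x \<in> group.ord (SL2_mod 5) ` K}"
  using normal_SL2_5_mem_iff[OF assms] subgroup.subset[OF normal_imp_subgroup[OF assms]]
  by fastforce

theorem psi_normal_divisible_SL2_5: "psi_normal_divisible (SL2_mod 5)"
  unfolding psi_normal_divisible_def
proof (intro allI impI)
  interpret group "SL2_mod 5"
    by (simp add: group_SL2_mod)
  fix K assume K: "K \<lhd> SL2_mod 5"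
  then have K_sub: "subgroup K (SL2_mod 5)"
    by (rule normal_imp_subgroup)
  define S where "S = ord ` K"
  have K_eq: "K = {x \<in> carrier (SL2_mod 5). ord x \<in> S}"
    unfolding S_def using normal_SL2_5_eq_ord_classes[OF K] .
  have S: "S \<subseteq> {1, 2, 3, 4, 5, 6, 10}" "1 \<in> S"
    unfolding S_def using subgroup.subset[OF K_sub] SL2_5_ord_range subgroup.one_closed[OF K_sub]
    by (blast, metis ord_id image_eqI)
  have "card K dvd 120"
    using lagrange[OF K_sub] order_SL2_5 by (metis dvd_triv_right)
  then have "(\<Sum>k\<in>S. SL2_5_ord_counts ! k) dvd 120"
    using sum_SL2_5_ord_classes[OF S(1), of "\<lambda>_. 1"] K_eq by simp
  then have "(\<Sum>k\<in>S. k * SL2_5_ord_counts ! k) dvd 663"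
    using SL2_5_ord_class_unions S by blast
  moreover have "psi (SL2_mod 5\<lparr>carrier := K\<rparr>) = (\<Sum>k\<in>S. k * SL2_5_ord_counts ! k)"
    using sum_SL2_5_ord_classes[OF S(1), of id] K_eq psi_subgroup[OF is_group K_sub]
    by (simp add: mult.commute)
  ultimately show "psi (SL2_mod 5\<lparr>carrier := K\<rparr>) dvd psi (SL2_mod 5)"
    by (simp add: psi_SL2_5)
qed

lemma order_integer_mod_group: "order (integer_mod_group n) = n"
  by (simp add: order_def carrier_integer_mod_group)

theorem mainTheorem7:
  fixes p :: nat
  assumes "Factorial_Ring.prime p" and "coprime (120::nat) p"
  shows "psi_normal_divisible (SL2_mod 5 \<times>\<times> integer_mod_group p)"
proof (rule psi_normal_divisible_DirProd_coprime)
  show "group (SL2_mod 5)" "group (integer_mod_group p)"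
    by (simp_all add: group_SL2_mod)
  show "finite (carrier (SL2_mod 5))" "finite (carrier (integer_mod_group p))"
    using assms(1) by (simp_all add: carrier_SL2_5 carrier_integer_mod_group)
  show "coprime (order (SL2_mod 5)) (order (integer_mod_group p))"
    using assms(2) by (simp add: order_SL2_5 order_integer_mod_group)
  show "psi_normal_divisible (SL2_mod 5)"
    by (rule psi_normal_divisible_SL2_5)
  show "psi_normal_divisible (integer_mod_group p)"
    using assms(1) by (simp add: psi_normal_divisible_prime_order order_integer_mod_group)
qed

end
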